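(* Let $P$ be a program. If one of the following holds: (a) every transaction of $P$ contains a single instruction, which is either a read or a write; (b) every transaction of $P$ contains only reads/writes that access a single shared variable (different transactions may access different variables); (c) there is a shared variable $x$ such that every transaction of $P$ contains a write to $x$; then $P$ is robust against snapshot isolation.
   Context: A program is a parallel composition of processes, each executing a sequence of transactions; a transaction is a sequence of instructions delimited by begin and commit, each instruction being a read $r:=x$ of a shared variable into a process-local register, a write $x:=e$ of a register expression into a shared variable, or $\mathtt{assume}(b)$ for a Boolean expression $b$ over registers. Under snapshot isolation (SI), when a transaction begins it takes a local snapshot of the central memory; its reads and writes access only this snapshot, and it can commit (copying its writes to the central memory) only if no transaction that committed after its begin wrote to a variable it writes to. Under serializability, transactions execute atomically. Traces abstract executions as issue and commit events of transactions together with the dependency relations program order, write-read, store order (write-write) and conflict (read-write). $P$ is robust against SI iff the set of traces of SI executions of $P$ equals the set of traces of serializable executions of $P$. *)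

theory Defs
  imports Main
begin

text \<open>Shared variables 'x, process-local registers 'r, values 'v, process identifiers 'p.
 A write stores the value of a register expression (a function of the register valuation);
 an assume blocks unless its Boolean register expression holds.\<close>

datatype ('x, 'r, 'v) instr =
    Read 'r 'x
  | Write 'x "('r \<Rightarrow> 'v) \<Rightarrow> 'v"
  | Assume "('r \<Rightarrow> 'v) \<Rightarrow> bool"

type_synonym ('x, 'r, 'v) txn = "('x, 'r, 'v) instr list"

datatype ('p, 'x, 'r, 'v) program =
  Program (txns: "'p \<Rightarrow> ('x, 'r, 'v) txn list") (mem0: "'x \<Rightarrow> 'v") (reg0: "'p \<Rightarrow> 'r \<Rightarrow> 'v")

text \<open>A transaction occurrence is identified by its process and its index in that process.\<close>
type_synonym 'p tid = "'p \<times> nat"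

record ('p, 'x, 'r, 'v) config =
  mem   :: "'x \<Rightarrow> 'v"
  lastw :: "'x \<Rightarrow> 'p tid option"       (* last committed writer (None = initial) *)
  pc    :: "'p \<Rightarrow> nat"                (* index of current / next transaction *)
  pos   :: "'p \<Rightarrow> nat option"         (* None: not inside a transaction *)
  regs  :: "'p \<Rightarrow> 'r \<Rightarrow> 'v"
  snap  :: "'p \<Rightarrow> 'x \<Rightarrow> 'v"
  snapw :: "'p \<Rightarrow> 'x \<Rightarrow> 'p tid option" (* writer of each snapshot value *)
  wset  :: "'p \<Rightarrow> 'x set"              (* variables written by current transaction *)
  clog  :: "('p tid \<times> 'x set) list"     (* committed transactions in commit order *)
  start :: "'p \<Rightarrow> nat"                (* length of clog when current txn began *)
  rd    :: "('p tid option \<times> 'x \<times> 'p tid) set"  (* write-read dependencies *)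

definition cur :: "('p, 'x, 'r, 'v) program \<Rightarrow> ('p, 'x, 'r, 'v) config \<Rightarrow> 'p \<Rightarrow> ('x, 'r, 'v) txn" where
  "cur P c p = txns P p ! pc c p"

text \<open>step ser P c c': if ser is True, a transaction may only begin when no other
 transaction is pending, so transactions execute atomically (serializability).\<close>
inductive step :: "bool \<Rightarrow> ('p, 'x, 'r, 'v) program \<Rightarrow> ('p, 'x, 'r, 'v) config \<Rightarrow> ('p, 'x, 'r, 'v) config \<Rightarrow> bool"
  for ser P where
  tbegin: "\<lbrakk> pos c p = None; pc c p < length (txns P p); ser \<longrightarrow> (\<forall>q. pos c q = None) \<rbrakk> \<Longrightarrow>
    step ser P c (c\<lparr>pos := (pos c)(p := Some 0), snap := (snap c)(p := mem c),
                     snapw := (snapw c)(p := lastw c), wset := (wset c)(p := {}),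
                     start := (start c)(p := length (clog c))\<rparr>)"
| tread: "\<lbrakk> pos c p = Some k; k < length (cur P c p); cur P c p ! k = Read r x \<rbrakk> \<Longrightarrow>
    step ser P c (c\<lparr>regs := (regs c)(p := (regs c p)(r := snap c p x)),
                     pos := (pos c)(p := Some (Suc k)),
                     rd := (if x \<in> wset c p then rd c else insert (snapw c p x, x, (p, pc c p)) (rd c))\<rparr>)"
| twrite: "\<lbrakk> pos c p = Some k; k < length (cur P c p); cur P c p ! k = Write x e \<rbrakk> \<Longrightarrow>
    step ser P c (c\<lparr>snap := (snap c)(p := (snap c p)(x := e (regs c p))),
                     wset := (wset c)(p := insert x (wset c p)),
                     pos := (pos c)(p := Some (Suc k))\<rparr>)"
| tassume: "\<lbrakk> pos c p = Some k; k < length (cur P c p); cur P c p ! k = Assume b; b (regs c p) \<rbrakk> \<Longrightarrow>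
    step ser P c (c\<lparr>pos := (pos c)(p := Some (Suc k))\<rparr>)"
| tcommit: "\<lbrakk> pos c p = Some k; k = length (cur P c p);
             \<forall>(t, W) \<in> set (drop (start c p) (clog c)). W \<inter> wset c p = {} \<rbrakk> \<Longrightarrow>
    step ser P c (c\<lparr>mem := (\<lambda>x. if x \<in> wset c p then snap c p x else mem c x),
                     lastw := (\<lambda>x. if x \<in> wset c p then Some (p, pc c p) else lastw c x),
                     clog := clog c @ [((p, pc c p), wset c p)],
                     pos := (pos c)(p := None),
                     pc := (pc c)(p := Suc (pc c p))\<rparr>)"

definition init_conf :: "('p, 'x, 'r, 'v) program \<Rightarrow> ('p, 'x, 'r, 'v) config" where
  "init_conf P = \<lparr>mem = mem0 P, lastw = (\<lambda>_. None), pc = (\<lambda>_. 0), pos = (\<lambda>_. None),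
     regs = reg0 P, snap = (\<lambda>_. mem0 P), snapw = (\<lambda>_ _. None), wset = (\<lambda>_. {}),
     clog = [], start = (\<lambda>_. 0), rd = {}\<rparr>"

definition reach :: "bool \<Rightarrow> ('p, 'x, 'r, 'v) program \<Rightarrow> ('p, 'x, 'r, 'v) config \<Rightarrow> bool" where
  "reach ser P c \<longleftrightarrow> (step ser P)\<^sup>*\<^sup>* (init_conf P) c"

record ('p, 'x) trace =
  tr_txns :: "'p tid set"
  tr_po   :: "('p tid \<times> 'p tid) set"
  tr_wr   :: "('p tid option \<times> 'x \<times> 'p tid) set"
  tr_ww   :: "('p tid option \<times> 'x \<times> 'p tid) set"
  tr_rw   :: "('p tid \<times> 'x \<times> 'p tid) set"

definition ww_of :: "('p tid \<times> 'x set) list \<Rightarrow> ('p tid option \<times> 'x \<times> 'p tid) set" where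
  "ww_of L =
     {(Some t1, x, t2) | t1 x t2. \<exists>i j W1 W2. i < j \<and> j < length L \<and> L ! i = (t1, W1) \<and>
                                  L ! j = (t2, W2) \<and> x \<in> W1 \<and> x \<in> W2}
   \<union> {(None, x, t) | x t. \<exists>W. (t, W) \<in> set L \<and> x \<in> W}"

definition trace_of :: "('p, 'x, 'r, 'v) config \<Rightarrow> ('p, 'x) trace" where
  "trace_of c =
    \<lparr>tr_txns = fst ` set (clog c),
     tr_po = {(t1, t2). t1 \<in> fst ` set (clog c) \<and> t2 \<in> fst ` set (clog c) \<and>
                        fst t1 = fst t2 \<and> snd t1 < snd t2},
     tr_wr = rd c,
     tr_ww = ww_of (clog c),
     tr_rw = {(t1, x, t2) | t1 x t2. \<exists>t0. (t0, x, t1) \<in> rd c \<and> (t0, x, t2) \<in> ww_of (clog c) \<and> t1 \<noteq> t2}\<rparr>"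

definition traces :: "bool \<Rightarrow> ('p, 'x, 'r, 'v) program \<Rightarrow> ('p, 'x) trace set" where
  "traces ser P = {trace_of c | c. reach ser P c \<and> (\<forall>p. pos c p = None)}"

definition robust_SI :: "('p, 'x, 'r, 'v) program \<Rightarrow> bool" where
  "robust_SI P \<longleftrightarrow> traces False P = traces True P"

fun is_read :: "('x, 'r, 'v) instr \<Rightarrow> bool" where
  "is_read (Read _ _) = True" | "is_read _ = False"

fun is_write :: "('x, 'r, 'v) instr \<Rightarrow> bool" where
  "is_write (Write _ _) = True" | "is_write _ = False"

fun accessed :: "('x, 'r, 'v) instr \<Rightarrow> 'x set" where
  "accessed (Read _ x) = {x}" | "accessed (Write x _) = {x}" | "accessed (Assume _) = {}"

definition single_instr_prog :: "('p, 'x, 'r, 'v) program \<Rightarrow> bool" where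
  "single_instr_prog P \<longleftrightarrow>
     (\<forall>p. \<forall>t \<in> set (txns P p). \<exists>i. t = [i] \<and> (is_read i \<or> is_write i))"

definition single_var_prog :: "('p, 'x, 'r, 'v) program \<Rightarrow> bool" where
  "single_var_prog P \<longleftrightarrow>
     (\<forall>p. \<forall>t \<in> set (txns P p). \<exists>x. \<forall>i \<in> set t. accessed i \<subseteq> {x})"

definition common_write_prog :: "('p, 'x, 'r, 'v) program \<Rightarrow> bool" where
  "common_write_prog P \<longleftrightarrow>
     (\<exists>x. \<forall>p. \<forall>t \<in> set (txns P p). \<exists>e. Write x e \<in> set t)"

end

theory Submission
  imports Defs
begin

text \<open>Serial executions are SI executions, so only the converse inclusion of traces needs work.

  If every transaction writes a common variable x, two transactions that are open at the same
  time can never both commit: the second one to commit meets a concurrent write to x. Such a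
  configuration stays \<open>doomed\<close> and never becomes quiescent again, so an SI execution ending
  with no pending transaction never had overlapping transactions and is itself serial.

  If every transaction accesses a single variable, a read-only transaction only sees its begin
  snapshot and can be moved to its begin, while a transaction writing x commits only if no
  concurrent transaction wrote x, so x is unchanged since its begin and the transaction can be
  moved to its commit. A forward simulation builds, alongside an SI execution, the serial
  execution ordered this way; when the SI execution is quiescent both have the same trace.
  Single-instruction transactions access a single variable.\<close>

abbreviation quiescent :: "('p, 'x, 'r, 'v) config \<Rightarrow> bool" where
  "quiescent c \<equiv> \<forall>p. pos c p = None"

definition before :: "'a list \<Rightarrow> 'a \<Rightarrow> 'a \<Rightarrow> bool" where
  "before L a b \<longleftrightarrow> (\<exists>xs ys. L = xs @ ys \<and> a \<in> set xs \<and> b \<in> set ys)"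

lemma before_Nil [simp]: "\<not> before [] a b"
  by (simp add: before_def)

lemma before_Cons: "before (x # L) a b \<longleftrightarrow> x = a \<and> b \<in> set L \<or> before L a b"
proof
  assume "before (x # L) a b"
  then obtain xs ys where "x # L = xs @ ys" "a \<in> set xs" "b \<in> set ys"
    unfolding before_def by blast
  then obtain xs' where "xs = x # xs'" "L = xs' @ ys"
    by (cases xs) auto
  then show "x = a \<and> b \<in> set L \<or> before L a b"
    using \<open>a \<in> set xs\<close> \<open>b \<in> set ys\<close> unfolding before_def by auto
next
  assume "x = a \<and> b \<in> set L \<or> before L a b"
  then show "before (x # L) a b"
    unfolding before_def by (metis append_Cons append_Nil list.set_intros(1,2))
qed

lemma before_filter: "before (filter P L) a b \<longleftrightarrow> P a \<and> P b \<and> before L a b"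
  by (induction L) (auto simp: before_Cons)

lemma before_iff_nth: "before L a b \<longleftrightarrow> (\<exists>i j. i < j \<and> j < length L \<and> L ! i = a \<and> L ! j = b)"
proof
  assume "before L a b"
  then obtain xs ys i j where "L = xs @ ys" "i < length xs" "xs ! i = a" "j < length ys" "ys ! j = b"
    unfolding before_def in_set_conv_nth by blast
  then show "\<exists>i j. i < j \<and> j < length L \<and> L ! i = a \<and> L ! j = b"
    by (intro exI[of _ i] exI[of _ "length xs + j"]) (simp add: nth_append)
next
  assume "\<exists>i j. i < j \<and> j < length L \<and> L ! i = a \<and> L ! j = b"
  then obtain i j where "i < j" "j < length L" "L ! i = a" "L ! j = b" by blast
  then show "before L a b"
    unfolding before_def
  proof (intro exI conjI)
    show "L = take j L @ drop j L" by simp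
    show "a \<in> set (take j L)" using \<open>i < j\<close> \<open>j < length L\<close> \<open>L ! i = a\<close>
      by (auto simp: in_set_conv_nth intro!: exI[of _ i])
    show "b \<in> set (drop j L)" using \<open>j < length L\<close> \<open>L ! j = b\<close>
      by (auto simp: in_set_conv_nth intro!: exI[of _ 0])
  qed
qed

abbreviation writer_log :: "('p tid \<times> 'x set) list \<Rightarrow> ('p tid \<times> 'x set) list" where
  "writer_log L \<equiv> filter (\<lambda>e. snd e \<noteq> {}) L"

lemma ww_of_writer_log: "ww_of (writer_log L) = ww_of L"
proof -
  have ww_of_before: "ww_of M =
     {(Some t1, x, t2) | t1 x t2. \<exists>W1 W2. before M (t1, W1) (t2, W2) \<and> x \<in> W1 \<and> x \<in> W2}
   \<union> {(None, x, t) | x t. \<exists>W. (t, W) \<in> set M \<and> x \<in> W}" for M :: "('p tid \<times> 'x set) list"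
    unfolding ww_of_def before_iff_nth by blast
  have "(\<exists>W1 W2. before (writer_log L) (t1, W1) (t2, W2) \<and> x \<in> W1 \<and> x \<in> W2) \<longleftrightarrow>
      (\<exists>W1 W2. before L (t1, W1) (t2, W2) \<and> x \<in> W1 \<and> x \<in> W2)" for t1 t2 x
    unfolding before_filter by auto
  moreover have "(\<exists>W. (t, W) \<in> set (writer_log L) \<and> x \<in> W) \<longleftrightarrow> (\<exists>W. (t, W) \<in> set L \<and> x \<in> W)"
    for t x by auto
  ultimately show ?thesis
    unfolding ww_of_before by simp
qed

subsection \<open>Local execution of a transaction\<close>

definition writes :: "('x, 'r, 'v) txn \<Rightarrow> 'x set" where
  "writes T = {x. \<exists>e. Write x e \<in> set T}"

lemma writes_simps [simp]:
  "writes [] = {}" "writes (xs @ ys) = writes xs \<union> writes ys"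
  "writes (Read r x # ys) = writes ys" "writes (Write x e # ys) = insert x (writes ys)"
  "writes (Assume b # ys) = writes ys"
  by (auto simp: writes_def)

lemma writes_single_var: "\<forall>i\<in>set T. accessed i \<subseteq> {x} \<Longrightarrow> writes T \<subseteq> {x}"
  unfolding writes_def by force

text \<open>The local state of a running transaction: registers, snapshot, write set, and the
  write-read dependencies (writer, variable) recorded so far; \<omega> gives the writer of
  each snapshot value.\<close>

type_synonym ('p, 'x, 'r, 'v) lstate =
  "('r \<Rightarrow> 'v) \<times> ('x \<Rightarrow> 'v) \<times> 'x set \<times> ('p tid option \<times> 'x) set"

fun local_step :: "('x \<Rightarrow> 'p tid option) \<Rightarrow> ('x, 'r, 'v) instr \<Rightarrow>
    ('p, 'x, 'r, 'v) lstate \<Rightarrow> ('p, 'x, 'r, 'v) lstate option" where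
  "local_step \<omega> (Read r x) (\<rho>, \<sigma>, w, A) =
     Some (\<rho>(r := \<sigma> x), \<sigma>, w, if x \<in> w then A else insert (\<omega> x, x) A)"
| "local_step \<omega> (Write x e) (\<rho>, \<sigma>, w, A) = Some (\<rho>, \<sigma>(x := e \<rho>), insert x w, A)"
| "local_step \<omega> (Assume b) (\<rho>, \<sigma>, w, A) = (if b \<rho> then Some (\<rho>, \<sigma>, w, A) else None)"

fun local_run :: "('x \<Rightarrow> 'p tid option) \<Rightarrow> ('x, 'r, 'v) txn \<Rightarrow>
    ('p, 'x, 'r, 'v) lstate \<Rightarrow> ('p, 'x, 'r, 'v) lstate option" where
  "local_run \<omega> [] L = Some L"
| "local_run \<omega> (i # is) L = Option.bind (local_step \<omega> i L) (local_run \<omega> is)"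

lemma local_run_append:
  "local_run \<omega> (xs @ ys) L = Option.bind (local_run \<omega> xs L) (local_run \<omega> ys)"
proof (induction xs arbitrary: L)
  case (Cons i xs)
  then show ?case
    by (cases "local_step \<omega> i L") simp_all
qed simp

lemma local_run_writes:
  "local_run \<omega> is (\<rho>, \<sigma>, w, A) = Some (\<rho>', \<sigma>', w', A') \<Longrightarrow> w' = w \<union> writes is"
proof (induction "is" arbitrary: \<rho> \<sigma> w A)
  case (Cons i "is") then show ?case
    by (cases i) (auto split: if_splits)
qed simp

lemma local_run_single_var:
  assumes "\<forall>i\<in>set is. accessed i \<subseteq> {x}"
    and "local_run \<omega> is (\<rho>, \<sigma>, w, A) = Some (\<rho>', \<sigma>', w', A')"
    and "\<sigma> x = \<tau> x" and "\<omega> x = \<omega>' x"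
  shows "\<exists>\<tau>'. local_run \<omega>' is (\<rho>, \<tau>, w, A) = Some (\<rho>', \<tau>', w', A') \<and> \<tau>' x = \<sigma>' x"
  using assms
proof (induction "is" arbitrary: \<rho> \<sigma> \<tau> w A)
  case (Cons i "is")
  then show ?case
    by (cases i) (auto split: if_splits)
qed simp

definition rd_of :: "('p, 'x, 'r, 'v) config \<Rightarrow> 'p tid \<Rightarrow> ('p tid option \<times> 'x) set" where
  "rd_of c t = {(a, x). (a, x, t) \<in> rd c}"

definition local_state :: "('p, 'x, 'r, 'v) config \<Rightarrow> 'p \<Rightarrow> ('p, 'x, 'r, 'v) lstate" where
  "local_state c p = (regs c p, snap c p, wset c p, rd_of c (p, pc c p))"

definition writes_since_begin :: "('p, 'x, 'r, 'v) config \<Rightarrow> 'p \<Rightarrow> 'x set" where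
  "writes_since_begin c p = \<Union> (snd ` set (drop (start c p) (clog c)))"

definition begin_conf :: "('p, 'x, 'r, 'v) config \<Rightarrow> 'p \<Rightarrow> ('p, 'x, 'r, 'v) config" where
  "begin_conf c p = c\<lparr>pos := (pos c)(p := Some 0), snap := (snap c)(p := mem c),
     snapw := (snapw c)(p := lastw c), wset := (wset c)(p := {}),
     start := (start c)(p := length (clog c))\<rparr>"

definition commit_conf :: "('p, 'x, 'r, 'v) config \<Rightarrow> 'p \<Rightarrow> ('p, 'x, 'r, 'v) config" where
  "commit_conf c p = c\<lparr>mem := (\<lambda>x. if x \<in> wset c p then snap c p x else mem c x),
     lastw := (\<lambda>x. if x \<in> wset c p then Some (p, pc c p) else lastw c x),
     clog := clog c @ [((p, pc c p), wset c p)],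
     pos := (pos c)(p := None), pc := (pc c)(p := Suc (pc c p))\<rparr>"

lemma begin_conf_simps [simp]:
  "mem (begin_conf c p) = mem c" "lastw (begin_conf c p) = lastw c" "clog (begin_conf c p) = clog c"
  "pc (begin_conf c p) = pc c" "regs (begin_conf c p) = regs c" "rd (begin_conf c p) = rd c"
  "pos (begin_conf c p) = (pos c)(p := Some 0)" "snap (begin_conf c p) = (snap c)(p := mem c)"
  "snapw (begin_conf c p) = (snapw c)(p := lastw c)" "wset (begin_conf c p) = (wset c)(p := {})"
  "start (begin_conf c p) = (start c)(p := length (clog c))"
  "rd_of (begin_conf c p) = rd_of c" "cur P (begin_conf c p) = cur P c"
  by (simp_all add: begin_conf_def rd_of_def cur_def fun_eq_iff)

lemma commit_conf_simps [simp]: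
  "mem (commit_conf c p) = (\<lambda>x. if x \<in> wset c p then snap c p x else mem c x)"
  "lastw (commit_conf c p) = (\<lambda>x. if x \<in> wset c p then Some (p, pc c p) else lastw c x)"
  "clog (commit_conf c p) = clog c @ [((p, pc c p), wset c p)]"
  "pos (commit_conf c p) = (pos c)(p := None)" "pc (commit_conf c p) = (pc c)(p := Suc (pc c p))"
  "regs (commit_conf c p) = regs c" "rd (commit_conf c p) = rd c" "snap (commit_conf c p) = snap c"
  "snapw (commit_conf c p) = snapw c" "wset (commit_conf c p) = wset c"
  "start (commit_conf c p) = start c" "rd_of (commit_conf c p) = rd_of c"
  "q \<noteq> p \<Longrightarrow> cur P (commit_conf c p) q = cur P c q"
  by (simp_all add: commit_conf_def rd_of_def cur_def fun_eq_iff)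

lemma step_begin_conf:
  "pos c p = None \<Longrightarrow> pc c p < length (txns P p) \<Longrightarrow> (ser \<longrightarrow> quiescent c) \<Longrightarrow>
    step ser P c (begin_conf c p)"
  unfolding begin_conf_def by (rule step.tbegin)

lemma step_commit_conf:
  assumes "pos c p = Some (length (cur P c p))" "writes_since_begin c p \<inter> wset c p = {}"
  shows "step ser P c (commit_conf c p)"
proof -
  have "W \<subseteq> writes_since_begin c p" if "(t, W) \<in> set (drop (start c p) (clog c))" for t W
    using that unfolding writes_since_begin_def by force
  then have "\<forall>(t, W) \<in> set (drop (start c p) (clog c)). W \<inter> wset c p = {}"
    using assms(2) by blast
  with assms(1) show ?thesis
    unfolding commit_conf_def by (rule step.tcommit[OF _ refl])
qed

definition same_except_local :: "('p, 'x, 'r, 'v) config \<Rightarrow> ('p, 'x, 'r, 'v) config \<Rightarrow> 'p \<Rightarrow> bool" where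
  "same_except_local c c1 p \<longleftrightarrow>
     mem c1 = mem c \<and> lastw c1 = lastw c \<and> clog c1 = clog c \<and> pc c1 = pc c \<and>
     start c1 = start c \<and> snapw c1 = snapw c \<and>
     (\<forall>q. q \<noteq> p \<longrightarrow> pos c1 q = pos c q \<and> regs c1 q = regs c q \<and> snap c1 q = snap c q \<and>
       wset c1 q = wset c q) \<and>
     (\<forall>t. t \<noteq> (p, pc c p) \<longrightarrow> rd_of c1 t = rd_of c t)"

lemma same_except_local_refl: "same_except_local c c p"
  by (simp add: same_except_local_def)

lemma same_except_local_other:
  assumes "same_except_local c c1 q" "p \<noteq> q"
  shows "pos c1 p = pos c p" "pc c1 p = pc c p" "snapw c1 p = snapw c p"
    "local_state c1 p = local_state c p"
  using assms by (auto simp: same_except_local_def local_state_def)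

lemma same_except_local_trans:
  "same_except_local c c1 p \<Longrightarrow> same_except_local c1 c2 p \<Longrightarrow> same_except_local c c2 p"
  by (simp add: same_except_local_def)

definition instr_step :: "('p, 'x, 'r, 'v) program \<Rightarrow> ('p, 'x, 'r, 'v) config \<Rightarrow>
    ('p, 'x, 'r, 'v) config \<Rightarrow> 'p \<Rightarrow> nat \<Rightarrow> bool" where
  "instr_step P c c1 p k \<longleftrightarrow>
     pos c p = Some k \<and> k < length (cur P c p) \<and> pos c1 p = Some (Suc k) \<and>
     same_except_local c c1 p \<and>
     local_step (snapw c p) (cur P c p ! k) (local_state c p) = Some (local_state c1 p)"

lemma instr_step_of_step:
  "step ser P c c1 \<Longrightarrow> pos c p = Some k \<Longrightarrow> pos c1 p = Some (Suc k) \<Longrightarrow> instr_step P c c1 p k"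
proof (induction rule: step.induct)
  case (tread c q k' r x)
  then have "q = p" by (auto split: if_splits)
  moreover have "rd_of (c\<lparr>regs := (regs c)(q := (regs c q)(r := snap c q x)), pos := (pos c)(q := Some (Suc k')),
      rd := (if x \<in> wset c q then rd c else insert (snapw c q x, x, (q, pc c q)) (rd c))\<rparr>) t =
    (if t = (q, pc c q) \<and> x \<notin> wset c q then insert (snapw c q x, x) (rd_of c t) else rd_of c t)" for t
    by (auto simp: rd_of_def)
  ultimately show ?case using tread
    by (simp add: instr_step_def same_except_local_def local_state_def cur_def)
next
  case (twrite c q k' x e)
  then have "q = p" by (auto split: if_splits)
  then show ?case using twrite
    by (simp add: instr_step_def same_except_local_def local_state_def rd_of_def cur_def)
next
  case (tassume c q k' b)
  then have "q = p" by (auto split: if_splits)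
  then show ?case using tassume
    by (simp add: instr_step_def same_except_local_def local_state_def rd_of_def cur_def)
qed (simp_all split: if_splits)

lemma step_of_local_step:
  assumes "pos c p = Some k" "k < length (cur P c p)"
    and "local_step (snapw c p) (cur P c p ! k) (local_state c p) = Some L"
  shows "\<exists>c1. step ser P c c1 \<and> instr_step P c c1 p k \<and> local_state c1 p = L"
proof -
  have "\<exists>c1. step ser P c c1 \<and> pos c1 p = Some (Suc k)"
  proof (cases "cur P c p ! k")
    case (Read r x)
    show ?thesis by (rule exI, rule conjI, rule step.tread[OF assms(1,2) Read]) simp
  next
    case (Write x e)
    show ?thesis by (rule exI, rule conjI, rule step.twrite[OF assms(1,2) Write]) simp
  next
    case (Assume b)
    then have "b (regs c p)"
      using assms(3) by (auto simp: local_state_def split: if_splits)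
    show ?thesis by (rule exI, rule conjI, rule step.tassume[OF assms(1,2) Assume \<open>b (regs c p)\<close>]) simp
  qed
  then obtain c1 where c1: "step ser P c c1" "pos c1 p = Some (Suc k)"
    by blast
  have "instr_step P c c1 p k"
    using c1(1) assms(1) c1(2) by (rule instr_step_of_step)
  then show ?thesis using c1(1) assms(3) by (auto simp: instr_step_def)
qed

lemma step_cases [consumes 1, case_names txn_begin instr txn_commit]:
  assumes "step ser P c c1"
  obtains (txn_begin) p where "pos c p = None" "pc c p < length (txns P p)" "c1 = begin_conf c p"
  | (instr) p k where "instr_step P c c1 p k"
  | (txn_commit) p where "pos c p = Some (length (cur P c p))"
      "writes_since_begin c p \<inter> wset c p = {}" "c1 = commit_conf c p"
  using assms
proof cases
  case (tbegin p)
  then show ?thesis using that(1) by (simp add: begin_conf_def)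
next
  case (tread p k)
  then show ?thesis using that(2) instr_step_of_step[OF assms, of p k] by simp
next
  case (twrite p k)
  then show ?thesis using that(2) instr_step_of_step[OF assms, of p k] by simp
next
  case (tassume p k)
  then show ?thesis using that(2) instr_step_of_step[OF assms, of p k] by simp
next
  case (tcommit p k)
  from tcommit(4) have "writes_since_begin c p \<inter> wset c p = {}"
    unfolding writes_since_begin_def by fastforce
  then show ?thesis using that(3)[of p] tcommit by (simp add: commit_conf_def)
qed

lemma steps_of_local_run:
  assumes "pos c p = Some k" "k \<le> length (cur P c p)"
    and "local_run (snapw c p) (drop k (cur P c p)) (local_state c p) = Some L"
  shows "\<exists>c1. (step ser P)\<^sup>*\<^sup>* c c1 \<and> pos c1 p = Some (length (cur P c p)) \<and>
    local_state c1 p = L \<and> same_except_local c c1 p"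
  using assms
proof (induction "length (cur P c p) - k" arbitrary: c k)
  case 0
  then show ?case by (auto intro: same_except_local_refl)
next
  case (Suc n)
  then have k: "k < length (cur P c p)" by simp
  then have "drop k (cur P c p) = cur P c p ! k # drop (Suc k) (cur P c p)"
    by (simp add: Cons_nth_drop_Suc)
  with Suc.prems(3) obtain L1 where
    L1: "local_step (snapw c p) (cur P c p ! k) (local_state c p) = Some L1"
      "local_run (snapw c p) (drop (Suc k) (cur P c p)) L1 = Some L"
    by (auto simp: bind_eq_Some_conv)
  obtain c1 where c1: "step ser P c c1" "instr_step P c c1 p k" "local_state c1 p = L1"
    using step_of_local_step[OF Suc.prems(1) k L1(1)] by blast
  then have same: "same_except_local c c1 p" "pos c1 p = Some (Suc k)"
    by (simp_all add: instr_step_def)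
  have cur: "cur P c1 p = cur P c p" "snapw c1 p = snapw c p"
    using same(1) by (simp_all add: same_except_local_def cur_def)
  have "n = length (cur P c1 p) - Suc k" "Suc k \<le> length (cur P c1 p)"
    using Suc.hyps(2) k cur by simp_all
  moreover have "local_run (snapw c1 p) (drop (Suc k) (cur P c1 p)) (local_state c1 p) = Some L"
    using L1(2) c1(3) cur by simp
  ultimately obtain c2 where c2: "(step ser P)\<^sup>*\<^sup>* c1 c2" "pos c2 p = Some (length (cur P c p))"
    "local_state c2 p = L" "same_except_local c1 c2 p"
    using Suc.hyps(1)[of c1 "Suc k"] same(2) cur by auto
  show ?case
  proof (intro exI conjI)
    show "(step ser P)\<^sup>*\<^sup>* c c2"
      using c1(1) c2(1) by (rule converse_rtranclp_into_rtranclp)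
    show "same_except_local c c2 p"
      using same(1) c2(4) by (rule same_except_local_trans)
  qed (use c2 in simp_all)
qed

lemma serial_run_txn:
  assumes "quiescent s" "pc s p < length (txns P p)"
    and "local_run (lastw s) (cur P s p) (regs s p, mem s, {}, rd_of s (p, pc s p)) =
      Some (\<rho>', \<sigma>', w', A')"
  shows "\<exists>s'. (step True P)\<^sup>*\<^sup>* s s' \<and> quiescent s' \<and>
    mem s' = (\<lambda>x. if x \<in> w' then \<sigma>' x else mem s x) \<and>
    lastw s' = (\<lambda>x. if x \<in> w' then Some (p, pc s p) else lastw s x) \<and>
    clog s' = clog s @ [((p, pc s p), w')] \<and> pc s' = (pc s)(p := Suc (pc s p)) \<and>
    regs s' = (regs s)(p := \<rho>') \<and> rd_of s' (p, pc s p) = A' \<and>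
    (\<forall>t. t \<noteq> (p, pc s p) \<longrightarrow> rd_of s' t = rd_of s t)"
proof -
  define s0 where "s0 = begin_conf s p"
  have "step True P s s0"
    unfolding s0_def using assms(1,2) by (intro step_begin_conf) auto
  moreover have "local_run (snapw s0 p) (drop 0 (cur P s0 p)) (local_state s0 p) =
      Some (\<rho>', \<sigma>', w', A')" "pos s0 p = Some 0"
    using assms(3) by (simp_all add: s0_def local_state_def)
  ultimately obtain s2 where "(step True P)\<^sup>*\<^sup>* s s2" and s2: "pos s2 p = Some (length (cur P s0 p))"
      "local_state s2 p = (\<rho>', \<sigma>', w', A')" "same_except_local s0 s2 p"
    using steps_of_local_run[of s0 p 0] by (meson converse_rtranclp_into_rtranclp le0)
  moreover have "step True P s2 (commit_conf s2 p)"
    using s2(1,3) by (intro step_commit_conf) (auto simp: same_except_local_def s0_def cur_def writes_since_begin_def)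
  moreover have "quiescent (commit_conf s2 p)"
    using s2(3) assms(1) by (auto simp: same_except_local_def s0_def)
  ultimately show ?thesis
    using s2(2,3)
    by (intro exI[of _ "commit_conf s2 p"])
      (auto simp: same_except_local_def s0_def local_state_def rd_of_def)

qed

definition wf_conf :: "('p, 'x, 'r, 'v) program \<Rightarrow> ('p, 'x, 'r, 'v) config \<Rightarrow> bool" where
  "wf_conf P c \<longleftrightarrow>
     (\<forall>p k. pos c p = Some k \<longrightarrow> pc c p < length (txns P p) \<and> k \<le> length (cur P c p) \<and>
        wset c p = writes (take k (cur P c p)) \<and> start c p \<le> length (clog c)) \<and>
     (\<forall>a x p n. (a, x, (p, n)) \<in> rd c \<longrightarrow> n < pc c p \<or> n = pc c p \<and> pos c p \<noteq> None)"

lemma wf_conf_step: "step ser P c c1 \<Longrightarrow> wf_conf P c \<Longrightarrow> wf_conf P c1"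
proof (induction rule: step.induct)
  case (tbegin c p) then show ?case
    by (auto simp: wf_conf_def cur_def; metis option.distinct(1))
next
  case (tread c p k r x) then show ?case
    by (auto simp: wf_conf_def cur_def take_Suc_conv_app_nth; metis option.distinct(1))
next
  case (twrite c p k x e) then show ?case
    by (auto simp: wf_conf_def cur_def take_Suc_conv_app_nth; metis option.distinct(1))
next
  case (tassume c p k b) then show ?case
    by (auto simp: wf_conf_def cur_def take_Suc_conv_app_nth; metis option.distinct(1))
next
  case (tcommit c p k) then show ?case
    by (auto simp: wf_conf_def cur_def le_SucI; metis less_Suc_eq)
qed

lemma wf_conf_steps: "(step ser P)\<^sup>*\<^sup>* c c1 \<Longrightarrow> wf_conf P c \<Longrightarrow> wf_conf P c1"
  by (induction rule: rtranclp_induct) (auto intro: wf_conf_step)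

lemma wf_conf_init: "wf_conf P (init_conf P)"
  by (simp add: wf_conf_def init_conf_def)

lemma wf_conf_reachable: "(step ser P)\<^sup>*\<^sup>* (init_conf P) c \<Longrightarrow> wf_conf P c"
  using wf_conf_steps wf_conf_init by blast

lemma wf_conf_idle_rd_of:
  assumes "wf_conf P c" "pos c p = None"
  shows "rd_of c (p, pc c p) = {}"
proof -
  have "(a, x, (p, pc c p)) \<notin> rd c" for a x
    using assms unfolding wf_conf_def by (metis less_irrefl option.distinct(1))
  then show ?thesis by (auto simp: rd_of_def)
qed

lemma wf_conf_pending_wset:
  "wf_conf P c \<Longrightarrow> pos c p = Some k \<Longrightarrow> wset c p \<subseteq> writes (cur P c p)"
  unfolding wf_conf_def by (metis append_take_drop_id sup_ge1 writes_simps(2))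

subsection \<open>Programs where every transaction writes a common variable\<close>

definition doomed :: "'x \<Rightarrow> ('p, 'x, 'r, 'v) config \<Rightarrow> bool" where
  "doomed x c \<longleftrightarrow> (\<exists>p q. p \<noteq> q \<and> pos c p \<noteq> None \<and> pos c q \<noteq> None) \<or>
     (\<exists>p. pos c p \<noteq> None \<and> x \<in> writes_since_begin c p)"

lemma doomed_step:
  assumes common: "\<forall>p. \<forall>T\<in>set (txns P p). x \<in> writes T"
    and "step ser P c c1" "wf_conf P c" "doomed x c"
  shows "doomed x c1"
  using assms(2)
proof (cases rule: step_cases)
  case (txn_begin p)
  then have "pos c q \<noteq> None \<Longrightarrow> pos c1 q \<noteq> None \<and> q \<noteq> p"
    and "q \<noteq> p \<Longrightarrow> writes_since_begin c1 q = writes_since_begin c q" for q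
    by (auto simp: writes_since_begin_def)
  then show ?thesis using \<open>doomed x c\<close> unfolding doomed_def by metis
next
  case (instr p k)
  then have "pos c1 q = None \<longleftrightarrow> pos c q = None" "writes_since_begin c1 q = writes_since_begin c q" for q
    by (cases "q = p"; auto simp: instr_step_def same_except_local_def writes_since_begin_def)+
  then show ?thesis using \<open>doomed x c\<close> unfolding doomed_def by metis
next
  case (txn_commit p)
  have "pc c p < length (txns P p)" and wset: "wset c p = writes (cur P c p)"
    using txn_commit(1) \<open>wf_conf P c\<close> by (auto simp: wf_conf_def)
  then have "cur P c p \<in> set (txns P p)"
    by (simp add: cur_def)
  then have x: "x \<in> wset c p"
    unfolding wset using common by simp
  obtain q where q: "q \<noteq> p" "pos c q \<noteq> None"
    using \<open>doomed x c\<close> unfolding doomed_def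
  proof (elim disjE exE conjE)
    fix p1 q1 assume "p1 \<noteq> q1" "pos c p1 \<noteq> None" "pos c q1 \<noteq> None"
    then show thesis using that by metis
  next
    fix p1 assume "pos c p1 \<noteq> None" "x \<in> writes_since_begin c p1"
    moreover have "p1 \<noteq> p"
      using calculation(2) txn_commit(2) x by auto
    ultimately show thesis using that by blast
  qed
  then have "start c q \<le> length (clog c)"
    using \<open>wf_conf P c\<close> by (auto simp: wf_conf_def)
  then have "x \<in> writes_since_begin c1 q"
    using x txn_commit(3) by (simp add: writes_since_begin_def)
  then show ?thesis
    using q txn_commit(3) unfolding doomed_def by auto
qed

lemma doomed_steps:
  assumes "\<forall>p. \<forall>T\<in>set (txns P p). x \<in> writes T"
  shows "(step ser P)\<^sup>*\<^sup>* c c1 \<Longrightarrow> wf_conf P c \<Longrightarrow> doomed x c \<Longrightarrow> doomed x c1"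
proof (induction rule: rtranclp_induct)
  case (step c1 c2)
  then show ?case using doomed_step[OF assms] wf_conf_steps by blast
qed

lemma step_serial_unless_doomed: "step ser P c c1 \<Longrightarrow> \<not> doomed x c1 \<Longrightarrow> step True P c c1"
proof (induction rule: step.induct)
  case (tbegin c p)
  then have "pos c q = None" for q
    unfolding doomed_def by (cases "q = p") fastforce+
  then show ?case
    using tbegin by (intro step.tbegin) auto
next
  case (tread c p k r x) show ?case using tread(1-3) by (rule step.tread)
next
  case (twrite c p k x e) show ?case using twrite(1-3) by (rule step.twrite)
next
  case (tassume c p k b) show ?case using tassume(1-4) by (rule step.tassume)
next
  case (tcommit c p k) show ?case using tcommit(1-3) by (rule step.tcommit)
qed

lemma serial_run_if_common_write:
  assumes "\<forall>p. \<forall>T\<in>set (txns P p). x \<in> writes T"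
  shows "(step False P)\<^sup>*\<^sup>* c c' \<Longrightarrow> wf_conf P c \<Longrightarrow> quiescent c' \<Longrightarrow> (step True P)\<^sup>*\<^sup>* c c'"
proof (induction rule: converse_rtranclp_induct)
  case (step c c1)
  then have wf1: "wf_conf P c1" using wf_conf_step by blast
  have "\<not> doomed x c1"
  proof
    assume "doomed x c1"
    then have "doomed x c'" using doomed_steps[OF assms step.hyps(2) wf1] by blast
    then show False using step.prems(2) by (simp add: doomed_def)
  qed
  with step.hyps(1) have "step True P c c1"
    by (rule step_serial_unless_doomed)
  then show ?case
    using step wf1 by (meson converse_rtranclp_into_rtranclp)
qed simp

definition completable :: "('p, 'x, 'r, 'v) program \<Rightarrow> ('p, 'x, 'r, 'v) config \<Rightarrow> 'p \<Rightarrow> bool" where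
  "completable P c p \<longleftrightarrow> (\<forall>k. pos c p = Some k \<longrightarrow>
     local_run (snapw c p) (drop k (cur P c p)) (local_state c p) \<noteq> None)"

lemma completable_step_back:
  assumes "step ser P c c1" "completable P c1 p"
  shows "completable P c p"
  using assms(1)
proof (cases rule: step_cases)
  case (txn_begin q)
  then show ?thesis using assms(2)
    by (cases "q = p") (auto simp: completable_def local_state_def)
next
  case (instr q k)
  show ?thesis
  proof (cases "q = p")
    case True
    with instr have k: "pos c p = Some k" "k < length (cur P c p)" "pos c1 p = Some (Suc k)"
      and L1: "local_step (snapw c p) (cur P c p ! k) (local_state c p) = Some (local_state c1 p)"
      and "cur P c1 p = cur P c p" "snapw c1 p = snapw c p"
      by (auto simp: instr_step_def same_except_local_def cur_def)
    then have "local_run (snapw c p) (drop (Suc k) (cur P c p)) (local_state c1 p) \<noteq> None"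
      using assms(2) by (simp add: completable_def)
    moreover have "drop k (cur P c p) = cur P c p ! k # drop (Suc k) (cur P c p)"
      using k(2) by (simp add: Cons_nth_drop_Suc)
    ultimately show ?thesis
      using k(1) L1 by (simp add: completable_def)
  next
    case False
    then show ?thesis
      using assms(2) same_except_local_other[of c c1 q p] instr
      by (simp add: completable_def instr_step_def cur_def)
  qed
next
  case (txn_commit q)
  then show ?thesis using assms(2)
    by (cases "q = p") (auto simp: completable_def local_state_def cur_def)
qed

lemma completable_if_quiescent_later:
  "(step ser P)\<^sup>*\<^sup>* c c' \<Longrightarrow> quiescent c' \<Longrightarrow> completable P c p"
proof (induction rule: converse_rtranclp_induct)
  case base then show ?case by (simp add: completable_def)
next
  case (step c c1) then show ?case by (blast intro: completable_step_back)
qed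

subsection \<open>Single-variable programs\<close>

text \<open>For a pending writer, \<sigma>0 is the snapshot taken at its begin.\<close>

definition writer_sim :: "('p, 'x, 'r, 'v) program \<Rightarrow> ('p, 'x, 'r, 'v) config \<Rightarrow>
    ('p, 'x, 'r, 'v) config \<Rightarrow> 'p \<Rightarrow> nat \<Rightarrow> bool" where
  "writer_sim P c s q k \<longleftrightarrow> pc s q = pc c q \<and>
     (\<exists>\<sigma>0. local_run (snapw c q) (take k (cur P c q)) (regs s q, \<sigma>0, {}, {}) = Some (local_state c q) \<and>
        (\<forall>x. (\<forall>i\<in>set (cur P c q). accessed i \<subseteq> {x}) \<longrightarrow> x \<notin> writes_since_begin c q \<longrightarrow>
           \<sigma>0 x = mem c x \<and> snapw c q x = lastw c x))"

definition reader_sim :: "('p, 'x, 'r, 'v) program \<Rightarrow> ('p, 'x, 'r, 'v) config \<Rightarrow>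
    ('p, 'x, 'r, 'v) config \<Rightarrow> 'p \<Rightarrow> nat \<Rightarrow> bool" where
  "reader_sim P c s q k \<longleftrightarrow> pc s q = Suc (pc c q) \<and>
     (\<exists>\<sigma>' w'. local_run (snapw c q) (drop k (cur P c q)) (local_state c q) =
        Some (regs s q, \<sigma>', w', rd_of s (q, pc c q)))"

definition pending_sim :: "('p, 'x, 'r, 'v) program \<Rightarrow> ('p, 'x, 'r, 'v) config \<Rightarrow>
    ('p, 'x, 'r, 'v) config \<Rightarrow> 'p \<Rightarrow> nat \<Rightarrow> bool" where
  "pending_sim P c s q k \<longleftrightarrow>
     (if writes (cur P c q) = {} then reader_sim P c s q k else writer_sim P c s q k)"

definition pending_readers :: "('p, 'x, 'r, 'v) program \<Rightarrow> ('p, 'x, 'r, 'v) config \<Rightarrow> 'p tid set" where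
  "pending_readers P c = {(q, n). pos c q \<noteq> None \<and> n = pc c q \<and> writes (cur P c q) = {}}"

text \<open>The serial configuration s has run every transaction committed in c, and also every
  pending read-only transaction of c, serialized at its begin; pending writing transactions
  are serialized at their commit and have not started in s.\<close>

definition ser_sim :: "('p, 'x, 'r, 'v) program \<Rightarrow> ('p, 'x, 'r, 'v) config \<Rightarrow>
    ('p, 'x, 'r, 'v) config \<Rightarrow> bool" where
  "ser_sim P c s \<longleftrightarrow>
     quiescent s \<and> mem s = mem c \<and> lastw s = lastw c \<and>
     writer_log (clog s) = writer_log (clog c) \<and>
     fst ` set (clog s) = fst ` set (clog c) \<union> pending_readers P c \<and>
     (\<forall>q. pos c q = None \<longrightarrow> pc s q = pc c q \<and> regs s q = regs c q) \<and>
     (\<forall>q n. pos c q = None \<or> n \<noteq> pc c q \<longrightarrow> rd_of s (q, n) = rd_of c (q, n)) \<and>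
     (\<forall>q k. pos c q = Some k \<longrightarrow> pending_sim P c s q k)"

lemma ser_simI:
  assumes "quiescent s" "mem s = mem c" "lastw s = lastw c"
    and "writer_log (clog s) = writer_log (clog c)"
    and "fst ` set (clog s) = fst ` set (clog c) \<union> pending_readers P c"
    and "\<And>q. pos c q = None \<Longrightarrow> pc s q = pc c q \<and> regs s q = regs c q"
    and "\<And>q n. pos c q = None \<or> n \<noteq> pc c q \<Longrightarrow> rd_of s (q, n) = rd_of c (q, n)"
    and "\<And>q k. pos c q = Some k \<Longrightarrow> pending_sim P c s q k"
  shows "ser_sim P c s"
  using assms by (simp add: ser_sim_def)

lemma ser_simD:
  assumes "ser_sim P c s"
  shows "quiescent s" "mem s = mem c" "lastw s = lastw c"
    and "writer_log (clog s) = writer_log (clog c)"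
    and "fst ` set (clog s) = fst ` set (clog c) \<union> pending_readers P c"
    and "pos c q = None \<Longrightarrow> pc s q = pc c q" "pos c q = None \<Longrightarrow> regs s q = regs c q"
    and "pos c q = None \<or> n \<noteq> pc c q \<Longrightarrow> rd_of s (q, n) = rd_of c (q, n)"
    and "pos c q = Some k \<Longrightarrow> pending_sim P c s q k"
  using assms by (auto simp: ser_sim_def)

lemma ser_sim_init: "ser_sim P (init_conf P) (init_conf P)"
  by (simp add: ser_sim_def init_conf_def pending_readers_def)

lemma pending_sim_frame:
  assumes "pending_sim P c s q k"
    and "pc c1 q = pc c q" "snapw c1 q = snapw c q" "local_state c1 q = local_state c q"
    and "pc s1 q = pc s q" "regs s1 q = regs s q" "rd_of s1 (q, pc c q) = rd_of s (q, pc c q)"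
    and "\<forall>x. x \<notin> writes_since_begin c1 q \<longrightarrow>
      x \<notin> writes_since_begin c q \<and> mem c1 x = mem c x \<and> lastw c1 x = lastw c x"
  shows "pending_sim P c1 s1 q k"
proof -
  have cur: "cur P c1 q = cur P c q"
    using assms(2) by (simp add: cur_def)
  show ?thesis
  proof (cases "writes (cur P c q) = {}")
    case True
    then show ?thesis
      using assms cur by (simp add: pending_sim_def reader_sim_def)
  next
    case False
    with assms(1) obtain \<sigma>0 where
      "pc s q = pc c q" "local_run (snapw c q) (take k (cur P c q)) (regs s q, \<sigma>0, {}, {}) = Some (local_state c q)"
      "\<forall>x. (\<forall>i\<in>set (cur P c q). accessed i \<subseteq> {x}) \<longrightarrow> x \<notin> writes_since_begin c q \<longrightarrow>
           \<sigma>0 x = mem c x \<and> snapw c q x = lastw c x"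
      by (auto simp: pending_sim_def writer_sim_def)
    then show ?thesis
      using False assms(2-) cur unfolding pending_sim_def writer_sim_def by (simp, metis)
  qed
qed

lemma pending_sim_instr:
  assumes "pending_sim P c s p k" "instr_step P c c1 p k"
  shows "pending_sim P c1 s p (Suc k)"
proof -
  from assms(2) have k: "k < length (cur P c p)" and same: "same_except_local c c1 p"
    and L1: "local_step (snapw c p) (cur P c p ! k) (local_state c p) = Some (local_state c1 p)"
    by (auto simp: instr_step_def)
  from same have cur: "cur P c1 p = cur P c p"
    and eq: "pc c1 p = pc c p" "snapw c1 p = snapw c p" "mem c1 = mem c" "lastw c1 = lastw c"
      "writes_since_begin c1 p = writes_since_begin c p"
    by (auto simp: same_except_local_def cur_def writes_since_begin_def)
  show ?thesis
  proof (cases "writes (cur P c p) = {}")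
    case True
    have "drop k (cur P c p) = cur P c p ! k # drop (Suc k) (cur P c p)"
      using k by (simp add: Cons_nth_drop_Suc)
    then show ?thesis
      using assms(1) True L1 cur eq by (simp add: pending_sim_def reader_sim_def)
  next
    case False
    obtain \<sigma>0 where "pc s p = pc c p"
      and run: "local_run (snapw c p) (take k (cur P c p)) (regs s p, \<sigma>0, {}, {}) = Some (local_state c p)"
      and agree: "\<forall>x. (\<forall>i\<in>set (cur P c p). accessed i \<subseteq> {x}) \<longrightarrow> x \<notin> writes_since_begin c p \<longrightarrow>
         \<sigma>0 x = mem c x \<and> snapw c p x = lastw c x"
      using assms(1) False by (auto simp: pending_sim_def writer_sim_def)
    moreover have "take (Suc k) (cur P c p) = take k (cur P c p) @ [cur P c p ! k]"
      using k by (simp add: take_Suc_conv_app_nth)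
    then have "local_run (snapw c p) (take (Suc k) (cur P c p)) (regs s p, \<sigma>0, {}, {}) =
        Some (local_state c1 p)"
      using run L1 by (simp add: local_run_append)
    ultimately show ?thesis
      using False cur eq unfolding pending_sim_def writer_sim_def by auto
  qed
qed

lemma ser_sim_instr:
  assumes sim: "ser_sim P c s" and step: "instr_step P c c1 p k"
  shows "ser_sim P c1 s"
proof -
  from step have pk: "pos c p = Some k" "pos c1 p = Some (Suc k)"
    and same: "same_except_local c c1 p"
    by (auto simp: instr_step_def)
  then have idle: "pos c1 q = None \<longleftrightarrow> pos c q = None" for q
    by (cases "q = p") (auto simp: same_except_local_def)
  have g: "mem c1 = mem c" "lastw c1 = lastw c" "clog c1 = clog c" "pc c1 = pc c"
    and cur: "cur P c1 = cur P c"
    using same by (auto simp: same_except_local_def cur_def fun_eq_iff)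
  have "pending_readers P c1 = pending_readers P c"
    using idle g cur by (simp add: pending_readers_def)
  moreover have "regs c1 q = regs c q" if "pos c1 q = None" for q
    using same that pk by (cases "q = p") (auto simp: same_except_local_def)
  moreover have "rd_of c1 (q, n) = rd_of c (q, n)" if "pos c1 q = None \<or> n \<noteq> pc c1 q" for q n
    using same that pk by (cases "q = p") (auto simp: same_except_local_def)
  moreover have "pending_sim P c1 s q k'" if "pos c1 q = Some k'" for q k'
  proof (cases "q = p")
    case True
    then show ?thesis
      using pending_sim_instr[OF _ step] sim pk that by (auto simp: ser_sim_def)
  next
    case False
    then have "pending_sim P c s q k'"
      using that same sim by (simp add: same_except_local_def ser_sim_def)
    moreover have "writes_since_begin c1 q = writes_since_begin c q"
      using same by (simp add: same_except_local_def writes_since_begin_def)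
    ultimately show ?thesis
      using same_except_local_other[OF same False] g by (auto intro: pending_sim_frame)
  qed
  ultimately show ?thesis
    using sim idle g by (simp add: ser_sim_def)
qed

lemma pending_sim_begin_other:
  assumes "ser_sim P c s" "q \<noteq> p" "pos c q = Some k"
    and "pc s1 q = pc s q" "regs s1 q = regs s q" "rd_of s1 (q, pc c q) = rd_of s (q, pc c q)"
  shows "pending_sim P (begin_conf c p) s1 q k"
  by (rule pending_sim_frame[OF ser_simD(9)[OF assms(1,3)]])
    (use assms in \<open>simp_all add: local_state_def writes_since_begin_def\<close>)

lemma pending_sim_commit_other:
  assumes "ser_sim P c s" "wf_conf P c" "q \<noteq> p" "pos c q = Some k"
    and "pc s1 q = pc s q" "regs s1 q = regs s q" "rd_of s1 (q, pc c q) = rd_of s (q, pc c q)"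
  shows "pending_sim P (commit_conf c p) s1 q k"
proof (rule pending_sim_frame[OF ser_simD(9)[OF assms(1,4)]])
  have "start c q \<le> length (clog c)"
    using assms(2,4) by (auto simp: wf_conf_def)
  then show "\<forall>x. x \<notin> writes_since_begin (commit_conf c p) q \<longrightarrow> x \<notin> writes_since_begin c q \<and>
      mem (commit_conf c p) x = mem c x \<and> lastw (commit_conf c p) x = lastw c x"
    by (simp add: writes_since_begin_def)
qed (use assms in \<open>simp_all add: local_state_def\<close>)

lemma ser_sim_begin_writer:
  assumes sim: "ser_sim P c s" and wf: "wf_conf P c" and p: "pos c p = None"
    and writer: "writes (cur P c p) \<noteq> {}"
  shows "ser_sim P (begin_conf c p) s"
proof (rule ser_simI)
  show "fst ` set (clog s) = fst ` set (clog (begin_conf c p)) \<union> pending_readers P (begin_conf c p)"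
    using ser_simD(5)[OF sim] writer by (auto simp: pending_readers_def split: if_splits)
next
  fix q k assume q: "pos (begin_conf c p) q = Some k"
  show "pending_sim P (begin_conf c p) s q k"
  proof (cases "q = p")
    case True
    have "rd_of c (p, pc c p) = {}"
      using wf p by (rule wf_conf_idle_rd_of)
    then show ?thesis
      using True q writer ser_simD(6,7)[OF sim p]
      by (auto simp: pending_sim_def writer_sim_def local_state_def intro!: exI[of _ "mem c"])
  next
    case False
    then show ?thesis
      using q sim by (auto intro: pending_sim_begin_other)
  qed
qed (use ser_simD[OF sim] in \<open>auto split: if_splits\<close>)

lemma ser_sim_commit_reader:
  assumes sim: "ser_sim P c s" and wf: "wf_conf P c" and p: "pos c p = Some (length (cur P c p))"
    and reader: "writes (cur P c p) = {}"
  shows "ser_sim P (commit_conf c p) s"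
proof -
  have "wset c p = {}"
    using wf_conf_pending_wset[OF wf p] reader by blast
  moreover have "reader_sim P c s p (length (cur P c p))"
    using ser_simD(9)[OF sim p] reader by (simp add: pending_sim_def)
  then have sp: "pc s p = Suc (pc c p)" "regs s p = regs c p"
    "rd_of s (p, pc c p) = rd_of c (p, pc c p)"
    by (simp_all add: reader_sim_def local_state_def)
  ultimately show ?thesis
  proof (intro ser_simI)
    have "pending_readers P c = insert (p, pc c p) (pending_readers P (commit_conf c p))"
      using p reader by (auto simp: pending_readers_def cur_def split: if_splits)
    then show "fst ` set (clog s) = fst ` set (clog (commit_conf c p)) \<union> pending_readers P (commit_conf c p)"
      using ser_simD(5)[OF sim] by auto
  next
    fix q n assume "pos (commit_conf c p) q = None \<or> n \<noteq> pc (commit_conf c p) q"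
    then have "(q, n) = (p, pc c p) \<or> pos c q = None \<or> n \<noteq> pc c q"
      by (auto split: if_splits)
    then show "rd_of s (q, n) = rd_of (commit_conf c p) (q, n)"
      using ser_simD(8)[OF sim] sp by auto
  next
    fix q k assume "pos (commit_conf c p) q = Some k"
    then show "pending_sim P (commit_conf c p) s q k"
      using pending_sim_commit_other[OF sim wf] by (auto split: if_splits)
  qed (use ser_simD[OF sim] in \<open>auto\<close>)
qed

lemma ser_sim_begin_reader:
  assumes sim: "ser_sim P c s" and wf: "wf_conf P c" and wfs: "wf_conf P s"
    and p: "pos c p = None" "pc c p < length (txns P p)"
    and reader: "writes (cur P c p) = {}"
    and compl: "completable P (begin_conf c p) p"
  shows "\<exists>s1. (step True P)\<^sup>*\<^sup>* s s1 \<and> ser_sim P (begin_conf c p) s1"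
proof -
  note sp = ser_simD(1-3)[OF sim] ser_simD(6,7)[OF sim p(1)]
  have "rd_of c (p, pc c p) = {}" "rd_of s (p, pc s p) = {}"
    using wf_conf_idle_rd_of[OF wf p(1)] wf_conf_idle_rd_of[OF wfs] sp(1) by simp_all
  then have start: "local_state (begin_conf c p) p = (regs s p, mem s, {}, rd_of s (p, pc s p))"
    "cur P s p = cur P c p"
    using sp by (simp_all add: local_state_def cur_def)
  then obtain \<rho>' \<sigma>' w' A' where
    run: "local_run (lastw s) (cur P s p) (regs s p, mem s, {}, rd_of s (p, pc s p)) = Some (\<rho>', \<sigma>', w', A')"
    using compl sp by (fastforce simp: completable_def)
  then have "w' = {}"
    using local_run_writes reader start(2) by fastforce
  then obtain s1 where "(step True P)\<^sup>*\<^sup>* s s1" and s1: "quiescent s1"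
    "mem s1 = mem s" "lastw s1 = lastw s" "clog s1 = clog s @ [((p, pc c p), {})]"
    "pc s1 = (pc s)(p := Suc (pc c p))" "regs s1 = (regs s)(p := \<rho>')"
    "rd_of s1 (p, pc c p) = A'" "\<And>t. t \<noteq> (p, pc c p) \<Longrightarrow> rd_of s1 t = rd_of s t"
    using serial_run_txn[OF sp(1) _ run] p(2) sp(4) by auto
  moreover have "ser_sim P (begin_conf c p) s1"
  proof (rule ser_simI)
    have "pending_readers P (begin_conf c p) = insert (p, pc c p) (pending_readers P c)"
      using reader by (auto simp: pending_readers_def split: if_splits)
    then show "fst ` set (clog s1) = fst ` set (clog (begin_conf c p)) \<union> pending_readers P (begin_conf c p)"
      using ser_simD(5)[OF sim] s1(4) by auto
  next
    fix q n assume "pos (begin_conf c p) q = None \<or> n \<noteq> pc (begin_conf c p) q"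
    then have "(q, n) \<noteq> (p, pc c p)" "pos c q = None \<or> n \<noteq> pc c q"
      by (auto split: if_splits)
    then show "rd_of s1 (q, n) = rd_of (begin_conf c p) (q, n)"
      using ser_simD(8)[OF sim] s1(8) by simp
  next
    fix q k assume q: "pos (begin_conf c p) q = Some k"
    show "pending_sim P (begin_conf c p) s1 q k"
    proof (cases "q = p")
      case True
      then show ?thesis
        using q run start s1 sp reader \<open>w' = {}\<close> by (simp add: pending_sim_def reader_sim_def)
    next
      case False
      then show ?thesis
        using q s1 by (auto intro: pending_sim_begin_other[OF sim])
    qed
  qed (use ser_simD[OF sim] s1 sp in \<open>auto split: if_splits\<close>)
  ultimately show ?thesis by blast
qed

text \<open>The commit check guarantees that the single variable x of a committing writer is
  unchanged since its begin, so its whole run can be replayed atomically at the commit.\<close>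

lemma writer_replay_at_commit:
  assumes sim: "ser_sim P c s" and wf: "wf_conf P c" and wfs: "wf_conf P s"
    and p: "pos c p = Some (length (cur P c p))"
    and check: "writes_since_begin c p \<inter> wset c p = {}"
    and writer: "writes (cur P c p) \<noteq> {}" and single: "\<forall>i\<in>set (cur P c p). accessed i \<subseteq> {x}"
  obtains \<tau>' where "pc s p = pc c p" "wset c p = {x}" "\<tau>' x = snap c p x"
    "local_run (lastw s) (cur P s p) (regs s p, mem s, {}, rd_of s (p, pc s p)) =
      Some (regs c p, \<tau>', {x}, rd_of c (p, pc c p))"
proof -
  obtain \<sigma>0 where sp: "pc s p = pc c p"
    and run0: "local_run (snapw c p) (cur P c p) (regs s p, \<sigma>0, {}, {}) = Some (local_state c p)"
    and agree: "x \<notin> writes_since_begin c p \<Longrightarrow> \<sigma>0 x = mem c x \<and> snapw c p x = lastw c x"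
    using ser_simD(9)[OF sim p] writer single by (auto simp: pending_sim_def writer_sim_def)
  have "wset c p = writes (cur P c p)"
    using wf p by (simp add: wf_conf_def)
  then have wx: "wset c p = {x}"
    using writer writes_single_var[OF single] by blast
  then have "\<sigma>0 x = mem s x" "snapw c p x = lastw s x"
    using agree check ser_simD(2,3)[OF sim] by auto
  from local_run_single_var[where \<tau> = "mem s" and \<omega>' = "lastw s", OF single run0[unfolded local_state_def] this]
  obtain \<tau>' where "local_run (lastw s) (cur P c p) (regs s p, mem s, {}, {}) =
      Some (regs c p, \<tau>', {x}, rd_of c (p, pc c p))" and "\<tau>' x = snap c p x"
    using wx by auto
  moreover have "rd_of s (p, pc s p) = {}"
    using wf_conf_idle_rd_of[OF wfs] ser_simD(1)[OF sim] by blast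
  ultimately show ?thesis
    using that sp wx by (simp add: cur_def)
qed

lemma ser_sim_commit_writer:
  assumes sim: "ser_sim P c s" and wf: "wf_conf P c" and wfs: "wf_conf P s"
    and p: "pos c p = Some (length (cur P c p))"
    and check: "writes_since_begin c p \<inter> wset c p = {}"
    and writer: "writes (cur P c p) \<noteq> {}" and single: "\<forall>i\<in>set (cur P c p). accessed i \<subseteq> {x}"
  shows "\<exists>s1. (step True P)\<^sup>*\<^sup>* s s1 \<and> ser_sim P (commit_conf c p) s1"
proof -
  obtain \<tau>' where sp: "pc s p = pc c p" and wx: "wset c p = {x}" and "\<tau>' x = snap c p x"
    and run: "local_run (lastw s) (cur P s p) (regs s p, mem s, {}, rd_of s (p, pc s p)) =
      Some (regs c p, \<tau>', {x}, rd_of c (p, pc c p))"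
    using writer_replay_at_commit[OF assms] .
  have "pc s p < length (txns P p)"
    using wf p sp by (simp add: wf_conf_def)
  then obtain s1 where "(step True P)\<^sup>*\<^sup>* s s1" and s1: "quiescent s1"
    "mem s1 = mem (commit_conf c p)" "lastw s1 = lastw (commit_conf c p)"
    "clog s1 = clog s @ [((p, pc c p), {x})]" "pc s1 = (pc s)(p := Suc (pc c p))"
    "regs s1 = (regs s)(p := regs c p)" "rd_of s1 (p, pc c p) = rd_of c (p, pc c p)"
    "\<And>t. t \<noteq> (p, pc c p) \<Longrightarrow> rd_of s1 t = rd_of s t"
    using serial_run_txn[OF ser_simD(1)[OF sim] _ run] sp \<open>\<tau>' x = snap c p x\<close> wx ser_simD(2,3)[OF sim]
    by (auto simp: fun_eq_iff)
  moreover have "ser_sim P (commit_conf c p) s1"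
  proof (rule ser_simI)
    have "pending_readers P (commit_conf c p) = pending_readers P c"
      using writer by (auto simp: pending_readers_def cur_def split: if_splits)
    then show "fst ` set (clog s1) = fst ` set (clog (commit_conf c p)) \<union> pending_readers P (commit_conf c p)"
      using ser_simD(5)[OF sim] s1(4) by auto
  next
    fix q n assume "pos (commit_conf c p) q = None \<or> n \<noteq> pc (commit_conf c p) q"
    then have "(q, n) = (p, pc c p) \<or> (q, n) \<noteq> (p, pc c p) \<and> (pos c q = None \<or> n \<noteq> pc c q)"
      by (auto split: if_splits)
    then show "rd_of s1 (q, n) = rd_of (commit_conf c p) (q, n)"
      using ser_simD(8)[OF sim] s1(7,8) by auto
  next
    fix q k assume "pos (commit_conf c p) q = Some k"
    then show "pending_sim P (commit_conf c p) s1 q k"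
      using pending_sim_commit_other[OF sim wf] s1 by (auto split: if_splits)
  qed (use ser_simD[OF sim] s1 sp wx in \<open>auto\<close>)
  ultimately show ?thesis by blast
qed

lemma ser_sim_step:
  assumes "single_var_prog P" and sim: "ser_sim P c s" and wf: "wf_conf P c" "wf_conf P s"
    and step: "step False P c c1" and compl: "\<And>q. completable P c1 q"
  shows "\<exists>s1. (step True P)\<^sup>*\<^sup>* s s1 \<and> ser_sim P c1 s1"
  using step
proof (cases rule: step_cases)
  case (txn_begin p)
  show ?thesis
  proof (cases "writes (cur P c p) = {}")
    case True
    then show ?thesis
      using ser_sim_begin_reader[OF sim wf txn_begin(1,2) True] compl txn_begin(3) by blast
  next
    case False
    then show ?thesis
      using ser_sim_begin_writer[OF sim wf(1) txn_begin(1) False] txn_begin(3) by blast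
  qed
next
  case (instr p k)
  then show ?thesis using ser_sim_instr[OF sim] by blast
next
  case (txn_commit p)
  show ?thesis
  proof (cases "writes (cur P c p) = {}")
    case True
    then show ?thesis
      using ser_sim_commit_reader[OF sim wf(1) txn_commit(1) True] txn_commit(3) by blast
  next
    case False
    have "pc c p < length (txns P p)"
      using wf(1) txn_commit(1) by (simp add: wf_conf_def)
    then have "cur P c p \<in> set (txns P p)"
      by (simp add: cur_def)
    then obtain x where "\<forall>i\<in>set (cur P c p). accessed i \<subseteq> {x}"
      using \<open>single_var_prog P\<close> unfolding single_var_prog_def by blast
    then show ?thesis
      using ser_sim_commit_writer[OF sim wf txn_commit(1,2) False] txn_commit(3) by blast
  qed
qed

lemma ser_sim_run:
  assumes "single_var_prog P"
  shows "(step False P)\<^sup>*\<^sup>* (init_conf P) c \<Longrightarrow> (step False P)\<^sup>*\<^sup>* c c' \<Longrightarrow> quiescent c' \<Longrightarrow>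
    \<exists>s. (step True P)\<^sup>*\<^sup>* (init_conf P) s \<and> ser_sim P c s"
proof (induction rule: rtranclp_induct)
  case base
  then show ?case using ser_sim_init by blast
next
  case (step c c1)
  then obtain s where s: "(step True P)\<^sup>*\<^sup>* (init_conf P) s" "ser_sim P c s"
    by (meson converse_rtranclp_into_rtranclp)
  moreover have "wf_conf P c" "wf_conf P s"
    using wf_conf_reachable step.hyps(1) s(1) by blast+
  moreover have "completable P c1 q" for q
    using step.prems by (rule completable_if_quiescent_later)
  ultimately obtain s1 where "(step True P)\<^sup>*\<^sup>* s s1" "ser_sim P c1 s1"
    using ser_sim_step[OF assms _ _ _ step.hyps(2)] by blast
  then show ?case
    using s(1) by (meson rtranclp_trans)
qed

lemma ser_sim_quiescent_trace:
  assumes sim: "ser_sim P c s" and "quiescent c"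
  shows "trace_of s = trace_of c"
proof -
  have "pending_readers P c = {}"
    using \<open>quiescent c\<close> by (simp add: pending_readers_def)
  then have "fst ` set (clog s) = fst ` set (clog c)"
    using ser_simD(5)[OF sim] by simp
  moreover have "ww_of (clog s) = ww_of (clog c)"
    using ser_simD(4)[OF sim] by (metis ww_of_writer_log)
  moreover have "rd s = rd c"
  proof -
    have "rd_of s t = rd_of c t" for t
      using ser_simD(8)[OF sim] \<open>quiescent c\<close> by (cases t) simp
    then show ?thesis
      by (auto simp: rd_of_def set_eq_iff)
  qed
  ultimately show ?thesis
    by (simp add: trace_of_def)
qed

lemma serial_traces_subset: "traces True P \<subseteq> traces False P"
proof -
  have "step True P \<le> step False P"
  proof (intro predicate2I)
    show "step True P c c1 \<Longrightarrow> step False P c c1" for c c1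
      by (induction rule: step.induct) (blast intro: step.intros)+
  qed
  then have "(step True P)\<^sup>*\<^sup>* \<le> (step False P)\<^sup>*\<^sup>*"
    by (rule rtranclp_mono)
  then show ?thesis
    unfolding traces_def reach_def by blast
qed

lemma SI_traces_subset_if_common_write:
  assumes "common_write_prog P"
  shows "traces False P \<subseteq> traces True P"
proof
  obtain x where x: "\<forall>p. \<forall>T\<in>set (txns P p). x \<in> writes T"
    using assms unfolding common_write_prog_def writes_def by blast
  fix tr assume "tr \<in> traces False P"
  then obtain c where c: "tr = trace_of c" "(step False P)\<^sup>*\<^sup>* (init_conf P) c" "quiescent c"
    unfolding traces_def reach_def by blast
  then have "(step True P)\<^sup>*\<^sup>* (init_conf P) c"
    using serial_run_if_common_write[OF x c(2) wf_conf_init] by blast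
  then show "tr \<in> traces True P"
    using c unfolding traces_def reach_def by blast
qed

lemma SI_traces_subset_if_single_var:
  assumes "single_var_prog P"
  shows "traces False P \<subseteq> traces True P"
proof
  fix tr assume "tr \<in> traces False P"
  then obtain c where c: "tr = trace_of c" "(step False P)\<^sup>*\<^sup>* (init_conf P) c" "quiescent c"
    unfolding traces_def reach_def by blast
  then obtain s where s: "(step True P)\<^sup>*\<^sup>* (init_conf P) s" "ser_sim P c s"
    using ser_sim_run[OF assms c(2) rtranclp.rtrancl_refl] by blast
  have "trace_of s = tr" "quiescent s"
    using ser_sim_quiescent_trace[OF s(2) c(3)] ser_simD(1)[OF s(2)] c(1) by simp_all
  then show "tr \<in> traces True P"
    using s(1) unfolding traces_def reach_def by blast
qed

lemma single_var_if_single_instr: "single_instr_prog P \<Longrightarrow> single_var_prog P"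
  unfolding single_instr_prog_def single_var_prog_def
proof (intro allI ballI)
  fix p T
  assume "\<forall>p. \<forall>T\<in>set (txns P p). \<exists>i. T = [i] \<and> (is_read i \<or> is_write i)" "T \<in> set (txns P p)"
  then obtain i where "T = [i]" by blast
  then show "\<exists>x. \<forall>i\<in>set T. accessed i \<subseteq> {x}"
    by (cases i) auto
qed

theorem corollary2:
  fixes P :: "('p, 'x, 'r, 'v) program"
  assumes "single_instr_prog P \<or> single_var_prog P \<or> common_write_prog P"
  shows "robust_SI P"
proof -
  have "traces False P \<subseteq> traces True P"
    using assms SI_traces_subset_if_common_write SI_traces_subset_if_single_var
      single_var_if_single_instr by blast
  then show ?thesis
    unfolding robust_SI_def using serial_traces_subset by blast
qed

end
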